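(* Consider, for each $p$, the model $Y = X\beta^\star + Z$ described in the context, with $\beta^\star \in \mathcal{B}_{p,s}$ and the estimator $\hat\beta_{\mathrm{MLE}} \in \arg\min_{\beta \in \mathcal{B}_{p,s}} \|\Sigma^{-1}(Y - X\beta)\|_2^2$. Fix $\delta \in (0,1)$. 1. If $s = o(p)$ and $s \to +\infty$ as $p \to +\infty$, set $n^\star := 2 s \log(p/s)$. 2. If $s = \alpha p$ for some constant $\alpha \in (0,1)$, set $n^\star := 2 h(\alpha) p$. In both settings, if there exists $\varepsilon > 0$ such that (for all sufficiently large $p$) $$ n_1 \log\left(1 + \frac{\delta s}{2\sigma_1^2}\right) + n_2 \log\left(1 + \frac{\delta s}{2\sigma_2^2}\right) \ge (1+\varepsilon) n^\star, $$ then $$ \mathbb{P}\Big( |\operatorname{supp}(\beta^\star) \,\triangle\, \operatorname{supp}(\hat\beta_{\mathrm{MLE}})| < 2\delta s \Big) \ge 1 - \exp\{-(\varepsilon + o(1)) n^\star/2\} \xrightarrow{p\to+\infty} 1 .$$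
   Context: All quantities may depend on $p$, and asymptotics are as $p \to +\infty$. Sample sizes $n_1, n_2 \ge 1$, $n = n_1 + n_2$. The design $X \in \mathbb{R}^{n\times p}$ has i.i.d. $\mathcal{N}(0,1)$ entries. Noise levels satisfy $0 < \sigma_1^2 < \sigma_2^2$; $\Sigma = \begin{pmatrix} \sigma_1 I_{n_1} & 0 \\ 0 & \sigma_2 I_{n_2}\end{pmatrix}$, $W \sim \mathcal{N}(0, I_n)$ independent of $X$, and $Z = \Sigma W$. The signal $\beta^\star$ is deterministic and belongs to $\mathcal{B}_{p,s} := \{\beta \in \{0,1\}^p : \|\beta\|_0 = s\}$, where $\|\beta\|_0$ is the number of nonzero coordinates. $\operatorname{supp}(\beta) = \{i : \beta_i \neq 0\}$, $A \triangle B = (A\cup B)\setminus(A\cap B)$. $h(x) = -x\log x - (1-x)\log(1-x)$ is the binary entropy (natural logarithm). The estimator $\hat\beta_{\mathrm{MLE}}$ (the maximum likelihood estimator over $\mathcal{B}_{p,s}$) uses knowledge of $\Sigma$. *)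

theory Defs
  imports "HOL-Probability.Probability" "HOL-Library.Landau_Symbols"
begin

definition bin_entropy :: "real \<Rightarrow> real" where
  "bin_entropy x = - x * ln x - (1 - x) * ln (1 - x)"

text \<open>Vectors in R^p are represented as functions nat => real vanishing outside {..<p}.\<close>
definition supp_vec :: "(nat \<Rightarrow> real) \<Rightarrow> nat set" where
  "supp_vec b = {i. b i \<noteq> 0}"

definition Bps :: "nat \<Rightarrow> nat \<Rightarrow> (nat \<Rightarrow> real) set" where
  "Bps p s = {b. (\<forall>i. b i = 0 \<or> b i = 1) \<and> (\<forall>i\<ge>p. b i = 0) \<and> card (supp_vec b) = s}"

definition symdiff :: "'a set \<Rightarrow> 'a set \<Rightarrow> 'a set" where
  "symdiff A B = (A \<union> B) - (A \<inter> B)"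

text \<open>Sample space: the design X (entries x(i,j), i<n, j<p) and the noise W (entries w i, i<n),
  all i.i.d. standard Gaussian.\<close>
definition gauss_model :: "nat \<Rightarrow> nat \<Rightarrow> ((nat \<times> nat \<Rightarrow> real) \<times> (nat \<Rightarrow> real)) measure" where
  "gauss_model n p =
     (PiM ({..<n} \<times> {..<p}) (\<lambda>_. density lborel std_normal_density))
     \<Otimes>\<^sub>M (PiM {..<n} (\<lambda>_. density lborel std_normal_density))"

text \<open>Diagonal entry of Sigma: sigma1 for the first n1 rows, sigma2 for the remaining ones.\<close>
definition noise_sd :: "nat \<Rightarrow> real \<Rightarrow> real \<Rightarrow> nat \<Rightarrow> real" where
  "noise_sd n1 \<sigma>1 \<sigma>2 i = (if i < n1 then \<sigma>1 else \<sigma>2)"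

definition obs :: "nat \<Rightarrow> nat \<Rightarrow> real \<Rightarrow> real \<Rightarrow> (nat \<Rightarrow> real)
    \<Rightarrow> (nat \<times> nat \<Rightarrow> real) \<times> (nat \<Rightarrow> real) \<Rightarrow> nat \<Rightarrow> real" where
  "obs n1 p \<sigma>1 \<sigma>2 bstar \<omega> i =
     (\<Sum>j<p. fst \<omega> (i, j) * bstar j) + noise_sd n1 \<sigma>1 \<sigma>2 i * snd \<omega> i"

definition mle_obj :: "nat \<Rightarrow> nat \<Rightarrow> nat \<Rightarrow> real \<Rightarrow> real \<Rightarrow> (nat \<Rightarrow> real)
    \<Rightarrow> (nat \<times> nat \<Rightarrow> real) \<times> (nat \<Rightarrow> real) \<Rightarrow> (nat \<Rightarrow> real) \<Rightarrow> real" where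
  "mle_obj n1 n2 p \<sigma>1 \<sigma>2 bstar \<omega> b =
     (\<Sum>i<n1 + n2. ((obs n1 p \<sigma>1 \<sigma>2 bstar \<omega> i - (\<Sum>j<p. fst \<omega> (i, j) * b j))
                    / noise_sd n1 \<sigma>1 \<sigma>2 i)\<^sup>2)"

definition mle_set :: "nat \<Rightarrow> nat \<Rightarrow> nat \<Rightarrow> nat \<Rightarrow> real \<Rightarrow> real \<Rightarrow> (nat \<Rightarrow> real)
    \<Rightarrow> (nat \<times> nat \<Rightarrow> real) \<times> (nat \<Rightarrow> real) \<Rightarrow> (nat \<Rightarrow> real) set" where
  "mle_set n1 n2 p s \<sigma>1 \<sigma>2 bstar \<omega> =
     {b \<in> Bps p s. \<forall>b' \<in> Bps p s.
        mle_obj n1 n2 p \<sigma>1 \<sigma>2 bstar \<omega> b \<le> mle_obj n1 n2 p \<sigma>1 \<sigma>2 bstar \<omega> b'}"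

definition recovery_prob :: "nat \<Rightarrow> nat \<Rightarrow> nat \<Rightarrow> nat \<Rightarrow> real \<Rightarrow> real \<Rightarrow> (nat \<Rightarrow> real) \<Rightarrow> real \<Rightarrow> real" where
  "recovery_prob n1 n2 p s \<sigma>1 \<sigma>2 bstar \<delta> =
     measure (gauss_model (n1 + n2) p)
       {\<omega> \<in> space (gauss_model (n1 + n2) p).
          \<forall>b \<in> mle_set n1 n2 p s \<sigma>1 \<sigma>2 bstar \<omega>.
             real (card (symdiff (supp_vec bstar) (supp_vec b))) < 2 * \<delta> * real s}"

end

theory Submission
  imports Defs
begin

(* For a competitor b with d = |supp bstar symdiff supp b|, the excess of the weighted least-squares
   objective of b over that of bstar is D = sum_i (G_i / sigma_i)^2 + 2 G_i W_i / sigma_i, where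
   G = X (bstar - b) has independent N(0, d) entries.  The Chernoff bound P(D <= 0) <= E exp(-D/4)
   can be computed exactly: integrating out the noise W and then each row of X gives
   prod_i (1 + d / (4 sigma_i^2))^(-1/2).  A union bound over the at most
   (p choose s) <= exp(p h(s/p)) supports with d >= 2 delta s shows that recovery fails with
   probability at most exp(p h(s/p) - T/2), T being the left-hand side of the threshold condition,
   and in both regimes p h(s/p) <= (1 + o(1)) n*/2. *)

abbreviation std_normal :: "real measure" where
  "std_normal \<equiv> density lborel std_normal_density"

abbreviation matvec :: "nat \<Rightarrow> (nat \<times> nat \<Rightarrow> real) \<Rightarrow> (nat \<Rightarrow> real) \<Rightarrow> nat \<Rightarrow> real" where
  "matvec p X u i \<equiv> \<Sum>j<p. X (i, j) * u j"

section \<open>Gaussian integrals\<close>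

lemma prob_space_std_normal: "prob_space std_normal"
  by (rule prob_space_normal_density) simp

lemma nn_integral_exp_linear_std_normal:
  "(\<integral>\<^sup>+w. ennreal (exp (c * w)) \<partial>std_normal) = ennreal (exp (c\<^sup>2 / 2))"
proof -
  have completed_square: "std_normal_density w * exp (c * w) = exp (c\<^sup>2 / 2) * normal_density c 1 w" for w
  proof -
    have "exp (c * w) * exp (- w\<^sup>2 / 2) = exp (c\<^sup>2 / 2) * exp (- (w - c)\<^sup>2 / 2)"
      unfolding mult_exp_exp by (rule arg_cong[where f = exp]) (simp add: power2_eq_square field_simps)
    then show ?thesis unfolding normal_density_def by (simp add: mult.commute)
  qed
  have "(\<integral>\<^sup>+w. ennreal (exp (c * w)) \<partial>std_normal)
      = (\<integral>\<^sup>+w. ennreal (exp (c\<^sup>2 / 2)) * ennreal (normal_density c 1 w) \<partial>lborel)"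
    by (subst nn_integral_density)
       (auto intro!: nn_integral_cong simp: ennreal_mult'[symmetric] completed_square)
  also have "\<dots> = ennreal (exp (c\<^sup>2 / 2))"
    using prob_space.emeasure_space_1[OF prob_space_normal_density[of 1 c]]
    by (subst nn_integral_cmult) (auto simp: emeasure_density)
  finally show ?thesis .
qed

lemma nn_integral_exp_cross_term_std_normal:
  assumes "\<sigma> \<noteq> 0"
  shows "(\<integral>\<^sup>+w. ennreal (exp (- g\<^sup>2 / (4 * \<sigma>\<^sup>2) - g * w / (2 * \<sigma>))) \<partial>std_normal)
       = ennreal (exp (- g\<^sup>2 / (8 * \<sigma>\<^sup>2)))"
proof -
  have "(\<integral>\<^sup>+w. ennreal (exp (- g\<^sup>2 / (4 * \<sigma>\<^sup>2) - g * w / (2 * \<sigma>))) \<partial>std_normal)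
      = (\<integral>\<^sup>+w. ennreal (exp (- g\<^sup>2 / (4 * \<sigma>\<^sup>2))) * ennreal (exp ((- g / (2 * \<sigma>)) * w)) \<partial>std_normal)"
    by (intro nn_integral_cong) (simp add: ennreal_mult'[symmetric] mult_exp_exp)
  also have "\<dots> = ennreal (exp (- g\<^sup>2 / (4 * \<sigma>\<^sup>2))) * (\<integral>\<^sup>+w. ennreal (exp ((- g / (2 * \<sigma>)) * w)) \<partial>std_normal)"
    by (rule nn_integral_cmult) simp
  also have "\<dots> = ennreal (exp (- g\<^sup>2 / (4 * \<sigma>\<^sup>2))) * ennreal (exp ((- g / (2 * \<sigma>))\<^sup>2 / 2))"
    unfolding nn_integral_exp_linear_std_normal ..
  also have "\<dots> = ennreal (exp (- g\<^sup>2 / (8 * \<sigma>\<^sup>2)))"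
    using assms by (simp add: ennreal_mult'[symmetric] mult_exp_exp power2_eq_square field_simps)
  finally show ?thesis .
qed

lemma nn_integral_normal_density_exp_square:
  assumes \<sigma>: "0 < \<sigma>" and a: "0 \<le> a"
  shows "(\<integral>\<^sup>+y. ennreal (normal_density 0 \<sigma> y) * ennreal (exp (- a * y\<^sup>2)) \<partial>lborel)
       = ennreal (1 / sqrt (1 + 2 * a * \<sigma>\<^sup>2))"
proof -
  define \<kappa> where "\<kappa> = 1 + 2 * a * \<sigma>\<^sup>2"
  define \<tau> where "\<tau> = \<sigma> / sqrt \<kappa>"
  have \<kappa>: "0 < \<kappa>" unfolding \<kappa>_def using a by (simp add: add_pos_nonneg)
  have \<tau>: "0 < \<tau>" unfolding \<tau>_def using \<sigma> \<kappa> by simp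
  have \<tau>2: "\<tau>\<^sup>2 = \<sigma>\<^sup>2 / \<kappa>" unfolding \<tau>_def using \<kappa> by (simp add: power_divide)
  have factor: "normal_density 0 \<sigma> y * exp (- a * y\<^sup>2) = normal_density 0 \<tau> y / sqrt \<kappa>" for y
  proof -
    have "exp (- y\<^sup>2 / (2 * \<sigma>\<^sup>2)) * exp (- a * y\<^sup>2) = exp (- y\<^sup>2 / (2 * \<tau>\<^sup>2))"
      unfolding mult_exp_exp \<tau>2 \<kappa>_def using \<sigma> by (simp add: field_simps)
    moreover have "sqrt (2 * pi * \<sigma>\<^sup>2) = sqrt (2 * pi * \<tau>\<^sup>2) * sqrt \<kappa>"
      unfolding \<tau>2 using \<kappa> by (simp add: real_sqrt_divide)
    ultimately show ?thesis
      unfolding normal_density_def by simp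
  qed
  have "(\<integral>\<^sup>+y. ennreal (normal_density 0 \<sigma> y) * ennreal (exp (- a * y\<^sup>2)) \<partial>lborel)
      = (\<integral>\<^sup>+y. ennreal (1 / sqrt \<kappa>) * ennreal (normal_density 0 \<tau> y) \<partial>lborel)"
    unfolding ennreal_mult'[symmetric, OF normal_density_nonneg] factor
    using \<kappa> by (simp add: ennreal_mult'[symmetric] mult.commute)
  also have "\<dots> = ennreal (1 / sqrt \<kappa>)"
    using prob_space.emeasure_space_1[OF prob_space_normal_density[OF \<tau>, of 0]]
    by (subst nn_integral_cmult) (auto simp: emeasure_density)
  finally show ?thesis unfolding \<kappa>_def .
qed

section \<open>Rows of a Gaussian design\<close>

lemma indep_vars_PiM_components:
  assumes K: "K \<noteq> {}" and M: "\<And>k. k \<in> K \<Longrightarrow> prob_space (M k)"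
  shows "prob_space.indep_vars (PiM K M) M (\<lambda>k x. x k) K"
proof -
  interpret prob_space "PiM K M" by (rule prob_space_PiM) (rule M)
  have "distr (PiM K M) (PiM K M) (\<lambda>x. \<lambda>k\<in>K. x k) = distr (PiM K M) (PiM K M) (\<lambda>x. x)"
    by (rule distr_cong) (auto simp: space_PiM PiE_def extensional_def restrict_def)
  moreover have "(\<Pi>\<^sub>M k\<in>K. distr (PiM K M) (M k) (\<lambda>x. x k)) = PiM K M"
    by (rule PiM_cong) (auto simp: distr_PiM_component M)
  ultimately show ?thesis
    by (subst indep_vars_iff_distr_eq_PiM'[OF K]) auto
qed

lemma distributed_PiM_std_normal_linear:
  fixes c :: "'i \<Rightarrow> real"
  assumes J: "finite J" "J \<subseteq> K" and c: "\<exists>k\<in>J. c k \<noteq> 0"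
  shows "distributed (PiM K (\<lambda>_. std_normal)) lborel (\<lambda>x. \<Sum>k\<in>J. c k * x k)
           (normal_density 0 (sqrt (\<Sum>k\<in>J. (c k)\<^sup>2)))"
proof -
  interpret prob_space "PiM K (\<lambda>_. std_normal)"
    by (rule prob_space_PiM) (rule prob_space_std_normal)
  define J' where "J' = {k \<in> J. c k \<noteq> 0}"
  have J': "finite J'" "J' \<noteq> {}" "J' \<subseteq> K" using J c by (auto simp: J'_def)
  have coord: "distributed (PiM K (\<lambda>_. std_normal)) lborel (\<lambda>x. x k) (normal_density 0 1)"
    if "k \<in> K" for k
  proof -
    have "distr (PiM K (\<lambda>_. std_normal)) lborel (\<lambda>x. x k)
        = distr (PiM K (\<lambda>_. std_normal)) std_normal (\<lambda>x. x k)"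
      by (rule distr_cong) auto
    also have "\<dots> = std_normal"
      using that by (intro distr_PiM_component prob_space_std_normal)
    finally show ?thesis unfolding distributed_def using that by auto
  qed
  have "indep_vars (\<lambda>_. std_normal) (\<lambda>k x. x k) J'"
    by (intro indep_vars_subset[OF indep_vars_PiM_components J'(3)])
       (use J' prob_space_std_normal in auto)
  then have "indep_vars (\<lambda>_. borel) (\<lambda>k x. c k * x k) J'"
    by (rule indep_vars_compose2[where Y = "\<lambda>k y. c k * y"]) simp
  moreover have "distributed (PiM K (\<lambda>_. std_normal)) lborel (\<lambda>x. c k * x k) (normal_density 0 \<bar>c k\<bar>)"
    if "k \<in> J'" for k
    using normal_density_affine[OF coord[of k], where \<alpha> = "c k" and \<beta> = 0] that J'
    by (auto simp: J'_def)
  ultimately have "distributed (PiM K (\<lambda>_. std_normal)) lborel (\<lambda>x. \<Sum>k\<in>J'. c k * x k)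
      (normal_density (\<Sum>k\<in>J'. 0) (sqrt (\<Sum>k\<in>J'. \<bar>c k\<bar>\<^sup>2)))"
    using J' by (intro sum_indep_normal) (auto simp: J'_def)
  moreover have "(\<Sum>k\<in>J'. c k * x k) = (\<Sum>k\<in>J. c k * x k)" for x
    by (rule sum.mono_neutral_left) (use J in \<open>auto simp: J'_def\<close>)
  moreover have "(\<Sum>k\<in>J'. \<bar>c k\<bar>\<^sup>2) = (\<Sum>k\<in>J. (c k)\<^sup>2)"
    unfolding power2_abs by (rule sum.mono_neutral_left) (use J in \<open>auto simp: J'_def\<close>)
  ultimately show ?thesis by simp
qed

lemma distributed_matvec:
  assumes i: "i < n" and u: "\<exists>j<p. u j \<noteq> 0"
  shows "distributed (PiM ({..<n} \<times> {..<p}) (\<lambda>_. std_normal)) lborel (\<lambda>X. matvec p X u i)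
           (normal_density 0 (sqrt (\<Sum>j<p. (u j)\<^sup>2)))"
proof -
  have row: "{i} \<times> {..<p} = (\<lambda>j. (i, j)) ` {..<p}" "inj_on (\<lambda>j. (i, j)) {..<p}"
    by (auto simp: inj_on_def)
  have "distributed (PiM ({..<n} \<times> {..<p}) (\<lambda>_. std_normal)) lborel
      (\<lambda>X. \<Sum>k\<in>{i} \<times> {..<p}. u (snd k) * X k)
      (normal_density 0 (sqrt (\<Sum>k\<in>{i} \<times> {..<p}. (u (snd k))\<^sup>2)))"
    using i u by (intro distributed_PiM_std_normal_linear) auto
  then show ?thesis unfolding row(1) sum.reindex[OF row(2)] by (simp add: mult.commute)
qed

lemma nn_integral_prod_matvec:
  fixes f :: "nat \<Rightarrow> real \<Rightarrow> ennreal"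
  assumes u: "\<exists>j<p. u j \<noteq> 0" and f [measurable]: "\<And>i. f i \<in> borel_measurable borel"
  shows "(\<integral>\<^sup>+X. (\<Prod>i<n. f i (matvec p X u i)) \<partial>PiM ({..<n} \<times> {..<p}) (\<lambda>_. std_normal))
       = (\<Prod>i<n. \<integral>\<^sup>+y. normal_density 0 (sqrt (\<Sum>j<p. (u j)\<^sup>2)) y * f i y \<partial>lborel)"
proof (cases "n = 0")
  case True
  then show ?thesis
    using prob_space.emeasure_space_1[OF prob_space_PiM[OF prob_space_std_normal]] by simp
next
  case False
  let ?P = "PiM ({..<n} \<times> {..<p}) (\<lambda>_. std_normal)"
  interpret prob_space ?P by (rule prob_space_PiM) (rule prob_space_std_normal)
  have "indep_vars (\<lambda>_. std_normal) (\<lambda>k X. X k) ({..<n} \<times> {..<p})"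
    using False u prob_space_std_normal by (intro indep_vars_PiM_components) auto
  then have "indep_vars (\<lambda>i. PiM ({i} \<times> {..<p}) (\<lambda>_. std_normal))
      (\<lambda>i X. restrict (\<lambda>k. X k) ({i} \<times> {..<p})) {..<n}"
    by (rule indep_vars_restrict) (auto simp: disjoint_family_on_def)
  then have "indep_vars (\<lambda>_. borel) (\<lambda>i X. f i (matvec p (restrict (\<lambda>k. X k) ({i} \<times> {..<p})) u i)) {..<n}"
    by (rule indep_vars_compose2[where Y = "\<lambda>i X. f i (matvec p X u i)"]) measurable
  moreover have "matvec p (restrict (\<lambda>k. X k) ({i} \<times> {..<p})) u i = matvec p X u i" for i X
    by (intro sum.cong) auto
  ultimately have "(\<integral>\<^sup>+X. (\<Prod>i<n. f i (matvec p X u i)) \<partial>?P) = (\<Prod>i<n. \<integral>\<^sup>+X. f i (matvec p X u i) \<partial>?P)"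
    by (intro indep_vars_nn_integral) auto
  also have "\<dots> = (\<Prod>i<n. \<integral>\<^sup>+y. normal_density 0 (sqrt (\<Sum>j<p. (u j)\<^sup>2)) y * f i y \<partial>lborel)"
    by (intro prod.cong refl distributed_nn_integral[symmetric] distributed_matvec u f) auto
  finally show ?thesis .
qed

lemma nn_integral_exp_gaussian_cross_terms:
  fixes \<sigma> u :: "nat \<Rightarrow> real"
  assumes \<sigma>: "\<And>i. 0 < \<sigma> i" and u: "\<exists>j<p. u j \<noteq> 0"
  shows "(\<integral>\<^sup>+\<omega>. ennreal (\<Prod>i<n. exp (- (matvec p (fst \<omega>) u i)\<^sup>2 / (4 * (\<sigma> i)\<^sup>2)
                 - matvec p (fst \<omega>) u i * snd \<omega> i / (2 * \<sigma> i))) \<partial>gauss_model n p)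
       = (\<Prod>i<n. ennreal (1 / sqrt (1 + (\<Sum>j<p. (u j)\<^sup>2) / (4 * (\<sigma> i)\<^sup>2))))"
proof -
  let ?PX = "PiM ({..<n} \<times> {..<p}) (\<lambda>_. std_normal)"
  let ?PW = "PiM {..<n} (\<lambda>_. std_normal)"
  define h where "h i X w = exp (- (matvec p X u i)\<^sup>2 / (4 * (\<sigma> i)\<^sup>2) - matvec p X u i * w / (2 * \<sigma> i))"
    for i X w
  interpret PW: prob_space ?PW by (rule prob_space_PiM) (rule prob_space_std_normal)
  have \<sigma>_nz: "\<sigma> i \<noteq> 0" for i
    using \<sigma>[of i] by simp
  interpret N: prob_space std_normal by (rule prob_space_std_normal)
  interpret PP: product_sigma_finite "\<lambda>_. std_normal" by standard
  have "(\<integral>\<^sup>+\<omega>. ennreal (\<Prod>i<n. h i (fst \<omega>) (snd \<omega> i)) \<partial>(?PX \<Otimes>\<^sub>M ?PW))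
      = (\<integral>\<^sup>+X. \<integral>\<^sup>+W. ennreal (\<Prod>i<n. h i X (W i)) \<partial>?PW \<partial>?PX)"
    by (subst PW.nn_integral_fst[symmetric]) (auto simp: h_def)
  also have "\<dots> = (\<integral>\<^sup>+X. (\<Prod>i<n. ennreal (exp (- (matvec p X u i)\<^sup>2 / (8 * (\<sigma> i)\<^sup>2)))) \<partial>?PX)"
  proof (rule nn_integral_cong)
    fix X
    have "(\<integral>\<^sup>+W. ennreal (\<Prod>i<n. h i X (W i)) \<partial>?PW) = (\<integral>\<^sup>+W. (\<Prod>i<n. ennreal (h i X (W i))) \<partial>?PW)"
      by (simp add: prod_ennreal h_def)
    also have "\<dots> = (\<Prod>i<n. \<integral>\<^sup>+w. ennreal (h i X w) \<partial>std_normal)"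
      by (rule PP.product_nn_integral_prod) (auto simp: h_def)
    also have "\<dots> = (\<Prod>i<n. ennreal (exp (- (matvec p X u i)\<^sup>2 / (8 * (\<sigma> i)\<^sup>2))))"
      unfolding h_def using \<sigma>_nz by (intro prod.cong refl nn_integral_exp_cross_term_std_normal)
    finally show "(\<integral>\<^sup>+W. ennreal (\<Prod>i<n. h i X (W i)) \<partial>?PW)
        = (\<Prod>i<n. ennreal (exp (- (matvec p X u i)\<^sup>2 / (8 * (\<sigma> i)\<^sup>2))))" .
  qed
  also have "\<dots> = (\<Prod>i<n. \<integral>\<^sup>+y. ennreal (normal_density 0 (sqrt (\<Sum>j<p. (u j)\<^sup>2)) y)
                    * ennreal (exp (- y\<^sup>2 / (8 * (\<sigma> i)\<^sup>2))) \<partial>lborel)"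
    by (rule nn_integral_prod_matvec[OF u]) simp
  also have "\<dots> = (\<Prod>i<n. ennreal (1 / sqrt (1 + (\<Sum>j<p. (u j)\<^sup>2) / (4 * (\<sigma> i)\<^sup>2))))"
  proof (intro prod.cong refl)
    fix i
    obtain j where "j < p" "u j \<noteq> 0"
      using u by blast
    then have "0 < (\<Sum>j<p. (u j)\<^sup>2)"
      by (intro sum_pos2[of _ j]) auto
    then show "(\<integral>\<^sup>+y. ennreal (normal_density 0 (sqrt (\<Sum>j<p. (u j)\<^sup>2)) y)
                    * ennreal (exp (- y\<^sup>2 / (8 * (\<sigma> i)\<^sup>2))) \<partial>lborel)
        = ennreal (1 / sqrt (1 + (\<Sum>j<p. (u j)\<^sup>2) / (4 * (\<sigma> i)\<^sup>2)))"
      using nn_integral_normal_density_exp_square[of "sqrt (\<Sum>j<p. (u j)\<^sup>2)" "1 / (8 * (\<sigma> i)\<^sup>2)"]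
      by simp
  qed
  finally show ?thesis unfolding gauss_model_def h_def .
qed

section \<open>Pairwise error probability of the MLE\<close>

lemma prob_space_gauss_model: "prob_space (gauss_model n p)"
  unfolding gauss_model_def by (intro prob_space_pair prob_space_PiM prob_space_std_normal)

lemma borel_measurable_mle_obj:
  "(\<lambda>\<omega>. mle_obj n1 n2 p \<sigma>1 \<sigma>2 bstar \<omega> b) \<in> borel_measurable (gauss_model (n1 + n2) p)"
  unfolding gauss_model_def mle_obj_def obs_def by measurable

lemma mle_obj_excess:
  assumes "\<sigma>1 \<noteq> 0" "\<sigma>2 \<noteq> 0"
  shows "mle_obj n1 n2 p \<sigma>1 \<sigma>2 bstar \<omega> b - mle_obj n1 n2 p \<sigma>1 \<sigma>2 bstar \<omega> bstar
       = (\<Sum>i<n1 + n2. (matvec p (fst \<omega>) (\<lambda>j. bstar j - b j) i)\<^sup>2 / (noise_sd n1 \<sigma>1 \<sigma>2 i)\<^sup>2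
            + 2 * matvec p (fst \<omega>) (\<lambda>j. bstar j - b j) i * snd \<omega> i / noise_sd n1 \<sigma>1 \<sigma>2 i)"
proof -
  have square_excess: "((x + \<sigma> * w - y) / \<sigma>)\<^sup>2 - ((x + \<sigma> * w - x) / \<sigma>)\<^sup>2
      = (x - y)\<^sup>2 / \<sigma>\<^sup>2 + 2 * (x - y) * w / \<sigma>" if "\<sigma> \<noteq> 0" for x y w \<sigma> :: real
    using that by (simp add: power2_eq_square field_simps)
  have matvec_diff: "matvec p X (\<lambda>j. bstar j - b j) i = matvec p X bstar i - matvec p X b i" for X i
    by (simp add: sum_subtractf algebra_simps)
  show ?thesis
    unfolding mle_obj_def obs_def sum_subtractf[symmetric] unfolding matvec_diff
    using assms by (intro sum.cong refl square_excess) (simp add: noise_sd_def)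
qed

lemma emeasure_mle_obj_le:
  fixes bstar b :: "nat \<Rightarrow> real"
  assumes \<sigma>1: "0 < \<sigma>1" and \<sigma>2: "0 < \<sigma>2" and ne: "\<exists>j<p. bstar j \<noteq> b j"
  shows "emeasure (gauss_model (n1 + n2) p)
           {\<omega> \<in> space (gauss_model (n1 + n2) p).
              mle_obj n1 n2 p \<sigma>1 \<sigma>2 bstar \<omega> b \<le> mle_obj n1 n2 p \<sigma>1 \<sigma>2 bstar \<omega> bstar}
         \<le> (\<Prod>i<n1 + n2. ennreal (1 / sqrt (1 + (\<Sum>j<p. (bstar j - b j)\<^sup>2)
                                                  / (4 * (noise_sd n1 \<sigma>1 \<sigma>2 i)\<^sup>2))))"
proof -
  let ?M = "gauss_model (n1 + n2) p"
  define \<sigma> where "\<sigma> = noise_sd n1 \<sigma>1 \<sigma>2"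
  define G where "G X i = matvec p X (\<lambda>j. bstar j - b j) i" for X i
  define D where "D \<omega> = mle_obj n1 n2 p \<sigma>1 \<sigma>2 bstar \<omega> b - mle_obj n1 n2 p \<sigma>1 \<sigma>2 bstar \<omega> bstar" for \<omega>
  have \<sigma>_pos: "0 < \<sigma> i" for i
    using \<sigma>1 \<sigma>2 by (simp add: \<sigma>_def noise_sd_def)
  have exp_D: "exp (- (1 / 4) * D \<omega>)
      = (\<Prod>i<n1 + n2. exp (- (G (fst \<omega>) i)\<^sup>2 / (4 * (\<sigma> i)\<^sup>2) - G (fst \<omega>) i * snd \<omega> i / (2 * \<sigma> i)))" for \<omega>
  proof -
    have "- (1 / 4) * D \<omega>
        = (\<Sum>i<n1 + n2. - (1 / 4) * ((G (fst \<omega>) i)\<^sup>2 / (\<sigma> i)\<^sup>2 + 2 * G (fst \<omega>) i * snd \<omega> i / \<sigma> i))"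
      unfolding D_def mle_obj_excess[OF \<sigma>1[THEN less_imp_neq, symmetric] \<sigma>2[THEN less_imp_neq, symmetric]]
      by (simp add: sum_distrib_left G_def \<sigma>_def)
    also have "\<dots> = (\<Sum>i<n1 + n2. - (G (fst \<omega>) i)\<^sup>2 / (4 * (\<sigma> i)\<^sup>2) - G (fst \<omega>) i * snd \<omega> i / (2 * \<sigma> i))"
      using \<sigma>_pos by (intro sum.cong refl) (simp add: power2_eq_square field_simps)
    finally have "- (1 / 4) * D \<omega> = \<dots>" .
    then show ?thesis by (simp add: exp_sum)
  qed
  \<comment> \<open>After averaging out the noise, E exp(-t D) = E exp(-(t - 2 t^2) sum_i (G_i / sigma_i)^2),
     so t = 1/4 is the optimal Chernoff parameter.\<close>
  have "emeasure ?M {\<omega> \<in> space ?M. D \<omega> \<le> 0}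
      \<le> ennreal (exp ((1 / 4) * 0)) * (\<integral>\<^sup>+\<omega>. ennreal (exp (- (1 / 4) * D \<omega>)) * indicator (space ?M) \<omega> \<partial>?M)"
    unfolding D_def by (intro Chernoff_ineq_nn_integral_le borel_measurable_diff borel_measurable_mle_obj) auto
  also have "\<dots> = (\<integral>\<^sup>+\<omega>. ennreal (exp (- (1 / 4) * D \<omega>)) \<partial>?M)"
    by (auto intro!: nn_integral_cong)
  also have "\<dots> = (\<Prod>i<n1 + n2. ennreal (1 / sqrt (1 + (\<Sum>j<p. (bstar j - b j)\<^sup>2) / (4 * (\<sigma> i)\<^sup>2))))"
    unfolding exp_D G_def using ne by (intro nn_integral_exp_gaussian_cross_terms \<sigma>_pos) auto
  finally show ?thesis
    unfolding D_def \<sigma>_def by simp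
qed

section \<open>Binary entropy\<close>

lemma binomial_le_exp_bin_entropy:
  assumes "s \<le> p"
  shows "real (p choose s) \<le> exp (real p * bin_entropy (real s / real p))"
proof (cases "s = 0 \<or> s = p")
  case True
  then show ?thesis
    by (auto simp: bin_entropy_def)
next
  case False
  define x where "x = real s / real p"
  have x: "0 < x" "x < 1"
    using False assms unfolding x_def by auto
  have "real (p choose s) * (x ^ s * (1 - x) ^ (p - s)) \<le> (\<Sum>k\<le>p. real (p choose k) * x ^ k * (1 - x) ^ (p - k))"
    using assms x by (subst mult.assoc[symmetric], intro member_le_sum) auto
  also have "\<dots> = 1"
    using binomial_ring[of x "1 - x" p] by simp
  finally have "real (p choose s) \<le> 1 / (x ^ s * (1 - x) ^ (p - s))"
    using x by (simp add: field_simps)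
  also have "x ^ s * (1 - x) ^ (p - s) = exp (- (real p * bin_entropy x))"
  proof -
    have "real s = real p * x" "real (p - s) = real p * (1 - x)"
      using False assms unfolding x_def by (auto simp: of_nat_diff field_simps)
    moreover have "x ^ s * (1 - x) ^ (p - s) = exp (real s * ln x + real (p - s) * ln (1 - x))"
      using x by (simp add: exp_add exp_of_nat_mult)
    ultimately show ?thesis
      unfolding bin_entropy_def by (simp add: algebra_simps)
  qed
  finally show ?thesis
    by (simp add: exp_minus inverse_eq_divide x_def)
qed

lemma bin_entropy_pos:
  assumes "0 < x" "x < 1"
  shows "0 < bin_entropy x"
proof -
  have "x * ln x < 0" "(1 - x) * ln (1 - x) < 0"
    using assms by (intro mult_pos_neg; simp)+
  then show ?thesis
    unfolding bin_entropy_def by simp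
qed

lemma bin_entropy_le:
  assumes x: "0 < x" "x < 1"
  shows "bin_entropy x \<le> x * (1 - ln x)"
proof -
  have "- ln (1 - x) = ln (1 / (1 - x))"
    using x by (simp add: ln_div)
  also have "\<dots> \<le> 1 / (1 - x) - 1"
    using x by (intro ln_le_minus_one) simp
  finally have "- ((1 - x) * ln (1 - x)) \<le> x"
    using x mult_left_mono[of "- ln (1 - x)" "1 / (1 - x) - 1" "1 - x"] by (simp add: field_simps)
  then show ?thesis
    unfolding bin_entropy_def by (simp add: algebra_simps)
qed

section \<open>Union bound over the sparse supports\<close>

lemma Bps_inj_on_supp_vec: "inj_on supp_vec (Bps p s)"
proof (rule inj_onI)
  fix b b' assume b: "b \<in> Bps p s" and b': "b' \<in> Bps p s" and eq: "supp_vec b = supp_vec b'"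
  show "b = b'"
  proof
    fix j
    have "b j = 0 \<or> b j = 1" "b' j = 0 \<or> b' j = 1"
      using b b' by (auto simp: Bps_def)
    moreover have "b j \<noteq> 0 \<longleftrightarrow> b' j \<noteq> 0"
      using eq unfolding supp_vec_def by blast
    ultimately show "b j = b' j" by auto
  qed
qed

lemma supp_vec_Bps: "b \<in> Bps p s \<Longrightarrow> supp_vec b \<subseteq> {..<p} \<and> card (supp_vec b) = s"
  by (auto simp: Bps_def supp_vec_def not_less[symmetric])

lemma finite_Bps: "finite (Bps p s)"
proof -
  have "supp_vec ` Bps p s \<subseteq> Pow {..<p}"
    using supp_vec_Bps by blast
  then show ?thesis
    using Bps_inj_on_supp_vec finite_imageD finite_subset by blast
qed

lemma card_Bps_le: "card (Bps p s) \<le> p choose s"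
proof -
  have "card (Bps p s) = card (supp_vec ` Bps p s)"
    using Bps_inj_on_supp_vec by (simp add: card_image)
  also have "\<dots> \<le> card {B. B \<subseteq> {..<p} \<and> card B = s}"
    using supp_vec_Bps by (intro card_mono) auto
  also have "\<dots> = p choose s"
    by (simp add: n_subsets)
  finally show ?thesis .
qed

lemma Bps_sum_power2_diff:
  assumes "b \<in> Bps p s" "b' \<in> Bps p s'"
  shows "(\<Sum>j<p. (b j - b' j)\<^sup>2) = real (card (symdiff (supp_vec b) (supp_vec b')))"
proof -
  have "(b j - b' j)\<^sup>2 = (if j \<in> symdiff (supp_vec b) (supp_vec b') then 1 else 0)" for j
    using assms by (auto simp: Bps_def symdiff_def supp_vec_def elim!: allE[of _ j])
  then have "(\<Sum>j<p. (b j - b' j)\<^sup>2) = real (card ({..<p} \<inter> symdiff (supp_vec b) (supp_vec b')))"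
    by (simp add: sum.If_cases)
  moreover have "symdiff (supp_vec b) (supp_vec b') \<subseteq> {..<p}"
    using assms supp_vec_Bps unfolding symdiff_def by blast
  ultimately show ?thesis
    by (simp add: Int_absorb1)
qed

lemma sets_recovery_event:
  "{\<omega> \<in> space (gauss_model (n1 + n2) p). \<forall>b \<in> mle_set n1 n2 p s \<sigma>1 \<sigma>2 bstar \<omega>. P b}
     \<in> sets (gauss_model (n1 + n2) p)"
proof -
  have "{\<omega> \<in> space (gauss_model (n1 + n2) p). \<forall>b \<in> mle_set n1 n2 p s \<sigma>1 \<sigma>2 bstar \<omega>. P b}
      = {\<omega> \<in> space (gauss_model (n1 + n2) p). \<forall>b \<in> Bps p s. P b \<or>
           (\<exists>b' \<in> Bps p s. mle_obj n1 n2 p \<sigma>1 \<sigma>2 bstar \<omega> b' < mle_obj n1 n2 p \<sigma>1 \<sigma>2 bstar \<omega> b)}"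
    by (auto simp: mle_set_def not_le[symmetric])
  also have "\<dots> \<in> sets (gauss_model (n1 + n2) p)"
    using finite_Bps[of p s] unfolding gauss_model_def mle_obj_def obs_def by measurable
  finally show ?thesis .
qed

lemma recovery_prob_le_1: "recovery_prob n1 n2 p s \<sigma>1 \<sigma>2 bstar \<delta> \<le> 1"
  unfolding recovery_prob_def by (rule prob_space.prob_le_1[OF prob_space_gauss_model])

lemma measure_mle_obj_le_Bps:
  assumes \<sigma>1: "0 < \<sigma>1" and \<sigma>2: "0 < \<sigma>2" and bstar: "bstar \<in> Bps p s" and b: "b \<in> Bps p s'"
    and c: "0 < c" "4 * c \<le> real (card (symdiff (supp_vec bstar) (supp_vec b)))"
  shows "measure (gauss_model (n1 + n2) p)
           {\<omega> \<in> space (gauss_model (n1 + n2) p).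
              mle_obj n1 n2 p \<sigma>1 \<sigma>2 bstar \<omega> b \<le> mle_obj n1 n2 p \<sigma>1 \<sigma>2 bstar \<omega> bstar}
         \<le> (\<Prod>i<n1 + n2. 1 / sqrt (1 + c / (noise_sd n1 \<sigma>1 \<sigma>2 i)\<^sup>2))"
proof -
  let ?M = "gauss_model (n1 + n2) p"
  interpret prob_space ?M by (rule prob_space_gauss_model)
  define d where "d = real (card (symdiff (supp_vec bstar) (supp_vec b)))"
  have d_eq: "(\<Sum>j<p. (bstar j - b j)\<^sup>2) = d"
    unfolding d_def using bstar b by (rule Bps_sum_power2_diff)
  have "\<exists>j<p. bstar j \<noteq> b j"
  proof (rule ccontr)
    assume "\<not> (\<exists>j<p. bstar j \<noteq> b j)"
    then have "d = 0"
      unfolding d_eq[symmetric] by simp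
    then show False
      using c by (simp add: d_def)
  qed
  then have "emeasure ?M {\<omega> \<in> space ?M. mle_obj n1 n2 p \<sigma>1 \<sigma>2 bstar \<omega> b \<le> mle_obj n1 n2 p \<sigma>1 \<sigma>2 bstar \<omega> bstar}
      \<le> (\<Prod>i<n1 + n2. ennreal (1 / sqrt (1 + d / (4 * (noise_sd n1 \<sigma>1 \<sigma>2 i)\<^sup>2))))"
    unfolding d_eq[symmetric] by (rule emeasure_mle_obj_le[OF \<sigma>1 \<sigma>2])
  also have "\<dots> = ennreal (\<Prod>i<n1 + n2. 1 / sqrt (1 + d / (4 * (noise_sd n1 \<sigma>1 \<sigma>2 i)\<^sup>2)))"
    by (intro prod_ennreal) (simp add: d_def)
  also have "\<dots> \<le> ennreal (\<Prod>i<n1 + n2. 1 / sqrt (1 + c / (noise_sd n1 \<sigma>1 \<sigma>2 i)\<^sup>2))"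
  proof (intro ennreal_leI prod_mono conjI)
    fix i
    define t where "t = (noise_sd n1 \<sigma>1 \<sigma>2 i)\<^sup>2"
    have t: "0 < t"
      using \<sigma>1 \<sigma>2 by (simp add: t_def noise_sd_def)
    then have "c / t \<le> d / (4 * t)" "0 \<le> c / t"
      using c by (simp_all add: d_def field_simps)
    then show "1 / sqrt (1 + d / (4 * (noise_sd n1 \<sigma>1 \<sigma>2 i)\<^sup>2)) \<le> 1 / sqrt (1 + c / (noise_sd n1 \<sigma>1 \<sigma>2 i)\<^sup>2)"
      unfolding t_def[symmetric] by (intro divide_left_mono real_sqrt_le_mono) auto
  qed (simp add: d_def)
  finally show ?thesis
    using c by (simp add: emeasure_eq_measure prod_nonneg)
qed

lemma recovery_prob_ge_union_bound:
  assumes \<sigma>1: "0 < \<sigma>1" and \<sigma>2: "0 < \<sigma>2" and bstar: "bstar \<in> Bps p s"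
    and \<delta>: "0 < \<delta>" and s: "0 < s"
  shows "1 - real (p choose s) * (\<Prod>i<n1 + n2. 1 / sqrt (1 + \<delta> * real s / (2 * (noise_sd n1 \<sigma>1 \<sigma>2 i)\<^sup>2)))
       \<le> recovery_prob n1 n2 p s \<sigma>1 \<sigma>2 bstar \<delta>"
proof -
  let ?M = "gauss_model (n1 + n2) p"
  let ?good = "\<lambda>b. real (card (symdiff (supp_vec bstar) (supp_vec b))) < 2 * \<delta> * real s"
  interpret prob_space ?M by (rule prob_space_gauss_model)
  define Q where "Q = (\<Prod>i<n1 + n2. 1 / sqrt (1 + \<delta> * real s / (2 * (noise_sd n1 \<sigma>1 \<sigma>2 i)\<^sup>2)))"
  define Bad where "Bad = {b \<in> Bps p s. \<not> ?good b}"
  define A where "A b = {\<omega> \<in> space ?M. mle_obj n1 n2 p \<sigma>1 \<sigma>2 bstar \<omega> b \<le> mle_obj n1 n2 p \<sigma>1 \<sigma>2 bstar \<omega> bstar}"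
    for b
  have "Bad \<subseteq> Bps p s"
    by (auto simp: Bad_def)
  then have Bad: "finite Bad" "card Bad \<le> p choose s"
    using finite_subset[OF _ finite_Bps] le_trans[OF card_mono[OF finite_Bps] card_Bps_le] by auto
  have A: "A b \<in> events" for b
    unfolding A_def by (intro borel_measurable_le borel_measurable_mle_obj)
  have "prob (A b) \<le> Q" if "b \<in> Bad" for b
    using measure_mle_obj_le_Bps[OF \<sigma>1 \<sigma>2 bstar _, of b s "\<delta> * real s / 2" n1 n2] that \<delta> s
    by (simp add: Bad_def A_def Q_def not_less)
  then have "prob (\<Union>b\<in>Bad. A b) \<le> real (p choose s) * Q"
    using finite_measure_subadditive_finite[OF Bad(1), of A] A sum_bounded_above[of Bad "\<lambda>b. prob (A b)" Q]
      mult_right_mono[OF of_nat_mono[OF Bad(2)], of Q] \<delta> by (fastforce simp: Q_def intro!: prod_nonneg)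
  moreover have "space ?M - (\<Union>b\<in>Bad. A b)
      \<subseteq> {\<omega> \<in> space ?M. \<forall>b \<in> mle_set n1 n2 p s \<sigma>1 \<sigma>2 bstar \<omega>. ?good b}"
    using bstar by (auto simp: mle_set_def Bad_def A_def)
  then have "prob (space ?M - (\<Union>b\<in>Bad. A b)) \<le> recovery_prob n1 n2 p s \<sigma>1 \<sigma>2 bstar \<delta>"
    unfolding recovery_prob_def by (intro finite_measure_mono sets_recovery_event)
  moreover have "(\<Union>b\<in>Bad. A b) \<in> events"
    using Bad(1) A by (intro sets.finite_UN) auto
  ultimately show ?thesis
    using prob_compl unfolding Q_def by fastforce
qed

lemma prod_noise_sd: "(\<Prod>i<n1 + n2. f (noise_sd n1 a b i)) = f a ^ n1 * f b ^ n2"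
proof (induction n2)
  case 0
  then show ?case
    by (simp add: noise_sd_def)
next
  case (Suc n2)
  then show ?case
    by (simp add: noise_sd_def mult_ac)
qed

lemma power_inverse_sqrt_eq_exp:
  assumes "0 < x"
  shows "(1 / sqrt x) ^ n = exp (- real n * ln x / 2)"
proof -
  have "sqrt x = exp (ln x / 2)"
    using assms by (simp add: powr_half_sqrt[symmetric] powr_def)
  then have "1 / sqrt x = exp (- ln x / 2)"
    by (simp add: exp_minus inverse_eq_divide)
  then show ?thesis
    by (simp add: exp_of_nat_mult[symmetric])
qed

lemma recovery_prob_ge_exp_bound:
  assumes \<sigma>1: "0 < \<sigma>1" and \<sigma>2: "0 < \<sigma>2" and bstar: "bstar \<in> Bps p s"
    and \<delta>: "0 < \<delta>" and s: "0 < s" "s \<le> p"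
  shows "1 - exp (real p * bin_entropy (real s / real p)
                 - (real n1 * ln (1 + \<delta> * real s / (2 * \<sigma>1\<^sup>2))
                    + real n2 * ln (1 + \<delta> * real s / (2 * \<sigma>2\<^sup>2))) / 2)
       \<le> recovery_prob n1 n2 p s \<sigma>1 \<sigma>2 bstar \<delta>"
proof -
  define T where "T = real n1 * ln (1 + \<delta> * real s / (2 * \<sigma>1\<^sup>2)) + real n2 * ln (1 + \<delta> * real s / (2 * \<sigma>2\<^sup>2))"
  have pos: "0 < 1 + \<delta> * real s / (2 * t\<^sup>2)" for t
    using \<delta> by (simp add: add_pos_nonneg)
  have "(\<Prod>i<n1 + n2. 1 / sqrt (1 + \<delta> * real s / (2 * (noise_sd n1 \<sigma>1 \<sigma>2 i)\<^sup>2)))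
      = (1 / sqrt (1 + \<delta> * real s / (2 * \<sigma>1\<^sup>2))) ^ n1 * (1 / sqrt (1 + \<delta> * real s / (2 * \<sigma>2\<^sup>2))) ^ n2"
    by (rule prod_noise_sd)
  also have "\<dots> = exp (- T / 2)"
    unfolding power_inverse_sqrt_eq_exp[OF pos] mult_exp_exp T_def by (simp add: field_simps)
  finally have prod_eq: "(\<Prod>i<n1 + n2. 1 / sqrt (1 + \<delta> * real s / (2 * (noise_sd n1 \<sigma>1 \<sigma>2 i)\<^sup>2))) = exp (- T / 2)" .
  have "1 - exp (real p * bin_entropy (real s / real p) - T / 2)
      = 1 - exp (real p * bin_entropy (real s / real p)) * exp (- T / 2)"
    by (simp add: mult_exp_exp)
  also have "\<dots> \<le> 1 - real (p choose s) * exp (- T / 2)"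
    using binomial_le_exp_bin_entropy[OF s(2)] by simp
  also have "\<dots> \<le> recovery_prob n1 n2 p s \<sigma>1 \<sigma>2 bstar \<delta>"
    using recovery_prob_ge_union_bound[OF \<sigma>1 \<sigma>2 bstar \<delta> s(1), of n1 n2] prod_eq by simp
  finally show ?thesis
    unfolding T_def .
qed

section \<open>The two asymptotic regimes\<close>

lemma sparse_regime_entropy_bound:
  fixes p s :: "nat \<Rightarrow> nat"
  assumes so: "(\<lambda>k. real (s k)) \<in> o(\<lambda>k. real (p k))" and s_lim: "filterlim s at_top sequentially"
  obtains r :: "nat \<Rightarrow> real" where "r \<longlonglongrightarrow> 0"
    and "eventually (\<lambda>k. 0 < s k \<and> s k \<le> p k \<and> real (p k) * bin_entropy (real (s k) / real (p k))
                          \<le> (1 - r k) * (real (s k) * ln (real (p k) / real (s k)))) sequentially"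
    and "filterlim (\<lambda>k. real (s k) * ln (real (p k) / real (s k))) at_top sequentially"
proof -
  define x where "x k = real (s k) / real (p k)" for k
  define L where "L k = ln (real (p k) / real (s k))" for k
  have "eventually (\<lambda>k. 1 \<le> s k) sequentially"
    using s_lim by (simp add: filterlim_at_top)
  moreover have "eventually (\<lambda>k. real (s k) \<le> 1 / 2 * real (p k)) sequentially"
    using landau_o.smallD[OF so, of "1 / 2"] by simp
  ultimately have ev: "eventually (\<lambda>k. 1 \<le> s k \<and> 2 * s k \<le> p k) sequentially"
    by eventually_elim simp
  then have x_pos: "eventually (\<lambda>k. 0 < x k \<and> x k < 1) sequentially"
    by eventually_elim (auto simp: x_def)
  have "filterlim x (at_right 0) sequentially"
    using smalloD_tendsto[OF so] x_pos unfolding x_def[abs_def]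
    by (intro tendsto_imp_filterlim_at_right) (auto elim: eventually_mono)
  then have "filterlim (\<lambda>k. - ln (x k)) at_top sequentially"
    using filterlim_compose[OF ln_at_0] by (simp add: filterlim_uminus_at_bot)
  moreover have "L k = - ln (x k)" if "0 < s k" for k
    using that by (simp add: L_def x_def ln_div)
  ultimately have L_lim: "filterlim L at_top sequentially"
    using ev by (elim filterlim_cong[THEN iffD1, rotated 3]) (auto elim: eventually_mono)
  then have L_ge_1: "eventually (\<lambda>k. 1 \<le> L k) sequentially"
    by (simp add: filterlim_at_top)
  show ?thesis
  proof
    show "(\<lambda>k. - 1 / L k) \<longlonglongrightarrow> 0"
      using tendsto_minus[OF tendsto_inverse_0_at_top[OF L_lim]] by (simp add: inverse_eq_divide)
    show "eventually (\<lambda>k. 0 < s k \<and> s k \<le> p k \<and> real (p k) * bin_entropy (real (s k) / real (p k))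
        \<le> (1 - - 1 / L k) * (real (s k) * ln (real (p k) / real (s k)))) sequentially"
      using ev x_pos L_ge_1
    proof eventually_elim
      case (elim k)
      have "real (p k) * bin_entropy (x k) \<le> real (p k) * (x k * (1 - ln (x k)))"
        using elim by (intro mult_left_mono bin_entropy_le) auto
      also have "\<dots> = (1 - - 1 / L k) * (real (s k) * L k)"
        using elim by (simp add: x_def L_def ln_div field_simps)
      finally show ?case
        using elim by (simp add: x_def L_def)
    qed
    show "filterlim (\<lambda>k. real (s k) * ln (real (p k) / real (s k))) at_top sequentially"
    proof (rule filterlim_at_top_mono[OF filterlim_compose[OF filterlim_real_sequentially s_lim]])
      show "eventually (\<lambda>k. real (s k) \<le> real (s k) * ln (real (p k) / real (s k))) sequentially"
        using L_ge_1 by eventually_elim (simp add: L_def mult_le_cancel_left1)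
    qed
  qed
qed

lemma linear_regime_entropy:
  fixes p s :: "nat \<Rightarrow> nat"
  assumes \<alpha>: "0 < \<alpha>" "\<alpha> < 1" and s: "\<And>k. real (s k) = \<alpha> * real (p k)"
    and p_lim: "filterlim p at_top sequentially"
  shows "eventually (\<lambda>k. 0 < s k \<and> s k \<le> p k
           \<and> real (p k) * bin_entropy (real (s k) / real (p k)) = bin_entropy \<alpha> * real (p k)) sequentially"
    and "filterlim (\<lambda>k. bin_entropy \<alpha> * real (p k)) at_top sequentially"
proof -
  have p_lim': "filterlim (\<lambda>k. real (p k)) at_top sequentially"
    by (rule filterlim_compose[OF filterlim_real_sequentially p_lim])
  then have "eventually (\<lambda>k. 1 / \<alpha> \<le> real (p k)) sequentially"
    by (simp add: filterlim_at_top)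
  then show "eventually (\<lambda>k. 0 < s k \<and> s k \<le> p k
      \<and> real (p k) * bin_entropy (real (s k) / real (p k)) = bin_entropy \<alpha> * real (p k)) sequentially"
  proof eventually_elim
    case (elim k)
    then have "1 \<le> real (s k)" "real (s k) \<le> real (p k)"
      using \<alpha> s[of k] by (auto simp: field_simps mult_left_le_one_le)
    then show ?case
      using \<alpha> s[of k] by simp
  qed
  show "filterlim (\<lambda>k. bin_entropy \<alpha> * real (p k)) at_top sequentially"
    using \<alpha> by (intro filterlim_tendsto_pos_mult_at_top[OF tendsto_const bin_entropy_pos p_lim'])
qed

lemma eventually_recovery_prob_ge:
  fixes p s n1 n2 :: "nat \<Rightarrow> nat" and \<sigma>1 \<sigma>2 r nstar :: "nat \<Rightarrow> real"
  assumes \<sigma>1: "\<And>k. 0 < \<sigma>1 k" and \<sigma>2: "\<And>k. 0 < \<sigma>2 k"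
    and bstar: "\<And>k. bstar k \<in> Bps (p k) (s k)" and \<delta>: "0 < \<delta>"
    and entropy: "eventually (\<lambda>k. 0 < s k \<and> s k \<le> p k
        \<and> real (p k) * bin_entropy (real (s k) / real (p k)) \<le> (1 - r k) * nstar k / 2) sequentially"
    and threshold: "eventually (\<lambda>k.
        real (n1 k) * ln (1 + \<delta> * real (s k) / (2 * (\<sigma>1 k)\<^sup>2))
      + real (n2 k) * ln (1 + \<delta> * real (s k) / (2 * (\<sigma>2 k)\<^sup>2))
      \<ge> (1 + \<epsilon>) * nstar k) sequentially"
  shows "eventually (\<lambda>k. recovery_prob (n1 k) (n2 k) (p k) (s k) (\<sigma>1 k) (\<sigma>2 k) (bstar k) \<delta>
           \<ge> 1 - exp (- (\<epsilon> + r k) * nstar k / 2)) sequentially"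
  using entropy threshold
proof eventually_elim
  case (elim k)
  then have "real (p k) * bin_entropy (real (s k) / real (p k))
      - (real (n1 k) * ln (1 + \<delta> * real (s k) / (2 * (\<sigma>1 k)\<^sup>2))
         + real (n2 k) * ln (1 + \<delta> * real (s k) / (2 * (\<sigma>2 k)\<^sup>2))) / 2
      \<le> - (\<epsilon> + r k) * nstar k / 2"
    by (simp add: field_simps)
  then have "1 - exp (- (\<epsilon> + r k) * nstar k / 2)
      \<le> 1 - exp (real (p k) * bin_entropy (real (s k) / real (p k))
          - (real (n1 k) * ln (1 + \<delta> * real (s k) / (2 * (\<sigma>1 k)\<^sup>2))
             + real (n2 k) * ln (1 + \<delta> * real (s k) / (2 * (\<sigma>2 k)\<^sup>2))) / 2)"
    by simp
  also have "\<dots> \<le> recovery_prob (n1 k) (n2 k) (p k) (s k) (\<sigma>1 k) (\<sigma>2 k) (bstar k) \<delta>"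
    using elim by (intro recovery_prob_ge_exp_bound \<sigma>1 \<sigma>2 bstar \<delta>) auto
  finally show ?case .
qed

lemma tendsto_1_of_exp_lower_bound:
  fixes f r m :: "nat \<Rightarrow> real"
  assumes r: "r \<longlonglongrightarrow> 0" and \<epsilon>: "0 < \<epsilon>" and m: "filterlim m at_top sequentially"
    and lower: "eventually (\<lambda>k. 1 - exp (- (\<epsilon> + r k) * m k) \<le> f k) sequentially"
    and upper: "\<And>k. f k \<le> 1"
  shows "f \<longlonglongrightarrow> 1"
proof -
  have "filterlim (\<lambda>k. (\<epsilon> + r k) * m k) at_top sequentially"
    using \<epsilon> tendsto_add[OF tendsto_const r] by (intro filterlim_tendsto_pos_mult_at_top[OF _ _ m]) auto
  then have "filterlim (\<lambda>k. - ((\<epsilon> + r k) * m k)) at_bot sequentially"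
    by (simp add: filterlim_uminus_at_top)
  from filterlim_compose[OF exp_at_bot this]
  have "(\<lambda>k. exp (- (\<epsilon> + r k) * m k)) \<longlonglongrightarrow> 0"
    unfolding minus_mult_left .
  then have "(\<lambda>k. 1 - exp (- (\<epsilon> + r k) * m k)) \<longlonglongrightarrow> 1"
    using tendsto_diff[OF tendsto_const] by fastforce
  from tendsto_sandwich[OF lower _ this tendsto_const] show ?thesis
    by (simp add: upper)
qed

theorem theorem2:
  fixes p s n1 n2 :: "nat \<Rightarrow> nat"
    and \<sigma>1 \<sigma>2 :: "nat \<Rightarrow> real"
    and bstar :: "nat \<Rightarrow> nat \<Rightarrow> real"
    and nstar :: "nat \<Rightarrow> real"
    and \<delta> \<epsilon> :: real
  assumes p_lim: "filterlim p at_top sequentially"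
    and n1_pos: "\<And>k. n1 k \<ge> 1" and n2_pos: "\<And>k. n2 k \<ge> 1"
    and sig1_pos: "\<And>k. 0 < \<sigma>1 k" and sig12: "\<And>k. \<sigma>1 k < \<sigma>2 k"
    and bstar_in: "\<And>k. bstar k \<in> Bps (p k) (s k)"
    and delta: "0 < \<delta>" "\<delta> < 1"
    and settings:
      "((\<lambda>k. real (s k)) \<in> o(\<lambda>k. real (p k))
          \<and> filterlim s at_top sequentially
          \<and> (\<forall>k. nstar k = 2 * real (s k) * ln (real (p k) / real (s k))))
       \<or> (\<exists>\<alpha>. 0 < \<alpha> \<and> \<alpha> < 1 \<and> (\<forall>k. real (s k) = \<alpha> * real (p k))
          \<and> (\<forall>k. nstar k = 2 * bin_entropy \<alpha> * real (p k)))"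
    and eps_pos: "0 < \<epsilon>"
    and threshold: "eventually (\<lambda>k.
        real (n1 k) * ln (1 + \<delta> * real (s k) / (2 * (\<sigma>1 k)\<^sup>2))
      + real (n2 k) * ln (1 + \<delta> * real (s k) / (2 * (\<sigma>2 k)\<^sup>2))
      \<ge> (1 + \<epsilon>) * nstar k) sequentially"
  shows "(\<exists>r :: nat \<Rightarrow> real. r \<longlonglongrightarrow> 0 \<and>
           eventually (\<lambda>k. recovery_prob (n1 k) (n2 k) (p k) (s k) (\<sigma>1 k) (\<sigma>2 k) (bstar k) \<delta>
              \<ge> 1 - exp (- (\<epsilon> + r k) * nstar k / 2)) sequentially)
         \<and> ((\<lambda>k. recovery_prob (n1 k) (n2 k) (p k) (s k) (\<sigma>1 k) (\<sigma>2 k) (bstar k) \<delta>) \<longlonglongrightarrow> 1)"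
proof -
  have sig2_pos: "0 < \<sigma>2 k" for k
    using sig1_pos[of k] sig12[of k] by linarith
  obtain r :: "nat \<Rightarrow> real" where r: "r \<longlonglongrightarrow> 0"
    and entropy: "eventually (\<lambda>k. 0 < s k \<and> s k \<le> p k
        \<and> real (p k) * bin_entropy (real (s k) / real (p k)) \<le> (1 - r k) * nstar k / 2) sequentially"
    and nstar_lim: "filterlim (\<lambda>k. nstar k / 2) at_top sequentially"
    using settings
  proof (elim disjE conjE exE)
    assume so: "(\<lambda>k. real (s k)) \<in> o(\<lambda>k. real (p k))" and s_lim: "filterlim s at_top sequentially"
      and nstar: "\<forall>k. nstar k = 2 * real (s k) * ln (real (p k) / real (s k))"
    show ?thesis
      by (rule sparse_regime_entropy_bound[OF so s_lim], rule that) (use nstar in simp_all)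
  next
    fix \<alpha> assume "0 < \<alpha>" "\<alpha> < 1" "\<forall>k. real (s k) = \<alpha> * real (p k)"
      and nstar: "\<forall>k. nstar k = 2 * bin_entropy \<alpha> * real (p k)"
    with linear_regime_entropy[of \<alpha> s p] p_lim show ?thesis
      by (intro that[of "\<lambda>_. 0"]) (simp_all add: eventually_mono)
  qed
  have lower: "eventually (\<lambda>k. recovery_prob (n1 k) (n2 k) (p k) (s k) (\<sigma>1 k) (\<sigma>2 k) (bstar k) \<delta>
      \<ge> 1 - exp (- (\<epsilon> + r k) * nstar k / 2)) sequentially"
    by (rule eventually_recovery_prob_ge[OF sig1_pos sig2_pos bstar_in delta(1) entropy threshold])
  then have "(\<lambda>k. recovery_prob (n1 k) (n2 k) (p k) (s k) (\<sigma>1 k) (\<sigma>2 k) (bstar k) \<delta>) \<longlonglongrightarrow> 1"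
    by (intro tendsto_1_of_exp_lower_bound[OF r eps_pos nstar_lim] recovery_prob_le_1) simp
  with r lower show ?thesis
    by blast
qed

end
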